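(* Let $U$ be a unicyclic graph of order $n\ge 5$, and let $X$ be an eigenvector of the adjacency matrix $A(U^c)$ corresponding to its least eigenvalue $\lambda_{\min}(U^c)$. Then $X$ has at least two positive entries and at least two negative entries.
   Context: A unicyclic graph is a connected graph containing exactly one cycle. $U^c$ denotes the complement of $U$, and $\lambda_{\min}(G)$ denotes the least eigenvalue of the adjacency matrix of a graph $G$. *)

theory Defs
  imports "Jordan_Normal_Form.Matrix" "Jordan_Normal_Form.Char_Poly"
begin

text \<open>A finite simple graph on vertex set {0..<n}: E symmetric and irreflexive
  (only its restriction to {0..<n} matters).\<close>
definition simple_graph :: "nat \<Rightarrow> (nat \<Rightarrow> nat \<Rightarrow> bool) \<Rightarrow> bool" where
  "simple_graph n E \<longleftrightarrow> (\<forall>u v. E u v \<longrightarrow> E v u) \<and> (\<forall>v. \<not> E v v)"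

definition connected_graph :: "nat \<Rightarrow> (nat \<Rightarrow> nat \<Rightarrow> bool) \<Rightarrow> bool" where
  "connected_graph n E \<longleftrightarrow>
     (\<forall>u<n. \<forall>v<n. (\<lambda>x y. x < n \<and> y < n \<and> E x y)\<^sup>*\<^sup>* u v)"

definition is_cycle :: "nat \<Rightarrow> (nat \<Rightarrow> nat \<Rightarrow> bool) \<Rightarrow> nat list \<Rightarrow> bool" where
  "is_cycle n E vs \<longleftrightarrow> length vs \<ge> 3 \<and> distinct vs \<and> set vs \<subseteq> {0..<n} \<and>
     (\<forall>i < length vs. E (vs ! i) (vs ! ((i + 1) mod length vs)))"

text \<open>Cycles are identified by their edge sets (so rotations/reversals coincide).\<close>
definition cycle_edges :: "nat list \<Rightarrow> nat set set" where
  "cycle_edges vs = {{vs ! i, vs ! ((i + 1) mod length vs)} | i. i < length vs}"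

definition cycles :: "nat \<Rightarrow> (nat \<Rightarrow> nat \<Rightarrow> bool) \<Rightarrow> nat set set set" where
  "cycles n E = cycle_edges ` {vs. is_cycle n E vs}"

definition unicyclic :: "nat \<Rightarrow> (nat \<Rightarrow> nat \<Rightarrow> bool) \<Rightarrow> bool" where
  "unicyclic n E \<longleftrightarrow> simple_graph n E \<and> connected_graph n E \<and> card (cycles n E) = 1"

definition adj_mat :: "nat \<Rightarrow> (nat \<Rightarrow> nat \<Rightarrow> bool) \<Rightarrow> real mat" where
  "adj_mat n E = mat n n (\<lambda>(i, j). if E i j then 1 else 0)"

definition compl_graph :: "(nat \<Rightarrow> nat \<Rightarrow> bool) \<Rightarrow> nat \<Rightarrow> nat \<Rightarrow> bool" where
  "compl_graph E u v \<longleftrightarrow> u \<noteq> v \<and> \<not> E u v"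

definition lambda_min :: "real mat \<Rightarrow> real" where
  "lambda_min A = Min {k. eigenvalue A k}"

end

theory Submission
  imports Defs "HOL-Analysis.Convex" "Jordan_Normal_Form.Spectral_Radius"
begin

(*
  Let U be unicyclic on n >= 5 vertices, G its complement, A = A(G), and x an
  eigenvector for lam = lambda_min(A).
  (1) Spectral part: lam < -1.  A unicyclic graph on >= 5 vertices has an edge pq and a vertex b
      adjacent to neither end (otherwise the cycle, together with a vertex off it or a chord,
      would yield a second cycle).  Thus p - b - q is an induced path in G, and the test vector
      y = e_p + e_q - e_b has Rayleigh quotient -4/3.  A real symmetric matrix has an eigenvalue
      below every Rayleigh quotient; we prove this from scratch: the infimum m of the Rayleigh
      quotient makes A - m I positive semidefinite with arbitrarily small Rayleigh quotients,
      which rules out a (bounded) inverse, so det (A - m I) = 0.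
  (2) Sign part: if lam < -1 then x has at least two negative entries.  Were there a single
      negative entry x_v, the eigen-equations force the positive support to be an edge {a, b}
      forming the unique cycle with a neighbour of v, and the equation at a fifth vertex then
      forces lam = -1 or lam = -2 with a contradictory value of x_a.  No negative entry at all
      is impossible since lam < 0.
  Applying (2) to x and -x proves the theorem.
*)

section \<open>Quadratic forms and the Rayleigh bound\<close>

(* n x n real matrices and vectors of R^n are represented by functions on indices below n. *)

definition sqnorm :: "nat \<Rightarrow> (nat \<Rightarrow> real) \<Rightarrow> real" where
  "sqnorm n x = (\<Sum>i<n. (x i)\<^sup>2)"

definition mat_app :: "nat \<Rightarrow> (nat \<Rightarrow> nat \<Rightarrow> real) \<Rightarrow> (nat \<Rightarrow> real) \<Rightarrow> nat \<Rightarrow> real" where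
  "mat_app n a x = (\<lambda>i. \<Sum>j<n. a i j * x j)"

definition bilin :: "nat \<Rightarrow> (nat \<Rightarrow> nat \<Rightarrow> real) \<Rightarrow> (nat \<Rightarrow> real) \<Rightarrow> (nat \<Rightarrow> real) \<Rightarrow> real" where
  "bilin n a x w = (\<Sum>i<n. x i * mat_app n a w i)"

definition frob :: "nat \<Rightarrow> (nat \<Rightarrow> nat \<Rightarrow> real) \<Rightarrow> real" where
  "frob n a = 1 + (\<Sum>i<n. \<Sum>j<n. (a i j)\<^sup>2)"

definition symmetric_mat :: "nat \<Rightarrow> (nat \<Rightarrow> nat \<Rightarrow> real) \<Rightarrow> bool" where
  "symmetric_mat n a \<longleftrightarrow> (\<forall>i<n. \<forall>j<n. a i j = a j i)"

lemma sqnorm_nonneg: "0 \<le> sqnorm n x"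
  unfolding sqnorm_def by (simp add: sum_nonneg)

lemma sqnorm_cong: "(\<And>i. i < n \<Longrightarrow> x i = y i) \<Longrightarrow> sqnorm n x = sqnorm n y"
  unfolding sqnorm_def by (intro sum.cong) auto

lemma frob_ge_1: "1 \<le> frob n a"
  unfolding frob_def by (simp add: sum_nonneg)

lemma sqnorm_mat_app_le: "sqnorm n (mat_app n a x) \<le> frob n a * sqnorm n x"
proof -
  have "sqnorm n (mat_app n a x) = (\<Sum>i<n. (\<Sum>j<n. a i j * x j)\<^sup>2)"
    unfolding sqnorm_def mat_app_def by simp
  also have "\<dots> \<le> (\<Sum>i<n. (\<Sum>j<n. (a i j)\<^sup>2) * sqnorm n x)"
    unfolding sqnorm_def by (intro sum_mono Cauchy_Schwarz_ineq_sum)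
  also have "\<dots> \<le> frob n a * sqnorm n x"
    unfolding frob_def sum_distrib_right[symmetric]
    by (intro mult_right_mono sqnorm_nonneg) simp
  finally show ?thesis .
qed

lemma abs_bilin_self_le: "\<bar>bilin n a x x\<bar> \<le> frob n a * sqnorm n x"
proof -
  have "(bilin n a x x)\<^sup>2 \<le> sqnorm n x * sqnorm n (mat_app n a x)"
    unfolding bilin_def sqnorm_def by (rule Cauchy_Schwarz_ineq_sum)
  also have "\<dots> \<le> sqnorm n x * (frob n a * sqnorm n x)"
    by (intro mult_left_mono sqnorm_mat_app_le sqnorm_nonneg)
  also have "\<dots> \<le> (frob n a * sqnorm n x)\<^sup>2"
  proof -
    have "sqnorm n x \<le> frob n a * sqnorm n x"
      using mult_right_mono[OF frob_ge_1[of n a] sqnorm_nonneg[of n x]] by simp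
    then show ?thesis
      using frob_ge_1[of n a] sqnorm_nonneg[of n x]
      by (simp add: power2_eq_square mult_right_mono)
  qed
  finally have "(bilin n a x x)\<^sup>2 \<le> (frob n a * sqnorm n x)\<^sup>2" .
  moreover have "0 \<le> frob n a * sqnorm n x"
    using frob_ge_1[of n a] sqnorm_nonneg[of n x] by simp
  ultimately show ?thesis using abs_le_square_iff[of "bilin n a x x" "frob n a * sqnorm n x"] by simp
qed

lemma mat_app_cong: "(\<And>j. j < n \<Longrightarrow> x j = y j) \<Longrightarrow> mat_app n a x i = mat_app n a y i"
  unfolding mat_app_def by (intro sum.cong) auto

lemma bilin_sym: assumes "symmetric_mat n a" shows "bilin n a x w = bilin n a w x"
proof -
  have "bilin n a x w = (\<Sum>i<n. \<Sum>j<n. x i * a i j * w j)"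
    unfolding bilin_def mat_app_def by (simp add: sum_distrib_left mult.assoc)
  also have "\<dots> = (\<Sum>j<n. \<Sum>i<n. w j * a j i * x i)"
    using assms unfolding symmetric_mat_def
    by (subst sum.swap) (intro sum.cong refl, simp add: mult.commute)
  also have "\<dots> = bilin n a w x"
    unfolding bilin_def mat_app_def by (simp add: sum_distrib_left mult.assoc)
  finally show ?thesis .
qed

lemma bilin_mat_app_self:
  assumes "symmetric_mat n a" shows "bilin n a x (mat_app n a x) = sqnorm n (mat_app n a x)"
  using bilin_sym[OF assms, of x "mat_app n a x"] unfolding bilin_def sqnorm_def
  by (simp add: power2_eq_square)

lemma bilin_line:
  assumes "symmetric_mat n a"
  shows "bilin n a (\<lambda>i. x i + t * w i) (\<lambda>i. x i + t * w i)
     = bilin n a x x + 2 * t * bilin n a x w + t\<^sup>2 * bilin n a w w"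
proof -
  have "bilin n a (\<lambda>i. x i + t * w i) (\<lambda>i. x i + t * w i)
     = bilin n a x x + t * bilin n a x w + t * bilin n a w x + t\<^sup>2 * bilin n a w w"
    unfolding bilin_def mat_app_def
    by (simp add: algebra_simps sum.distrib sum_distrib_left power2_eq_square)
  then show ?thesis using bilin_sym[OF assms, of w x] by simp
qed

(* Cauchy-Schwarz for a positive semidefinite symmetric form: the discriminant of the
   nonnegative quadratic polynomial t |-> q(x + t w) is nonpositive. *)
lemma psd_Cauchy_Schwarz:
  assumes "symmetric_mat n a" and psd: "\<And>z. 0 \<le> bilin n a z z"
  shows "(bilin n a x w)\<^sup>2 \<le> bilin n a x x * bilin n a w w"
proof -
  define p q r where "p = bilin n a x x" and "q = bilin n a x w" and "r = bilin n a w w"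
  have line: "0 \<le> p + 2 * t * q + t\<^sup>2 * r" for t
    using psd[of "\<lambda>i. x i + t * w i"] bilin_line[OF assms(1)] unfolding p_def q_def r_def by metis
  have "0 \<le> r" using psd unfolding r_def by simp
  then consider "r = 0" | "r > 0" by linarith
  then have "q\<^sup>2 \<le> p * r"
  proof cases
    case 1
    have "q = 0"
    proof (rule ccontr)
      assume "q \<noteq> 0"
      then show False using line[of "-(p + 1) / (2 * q)"] 1 by (simp add: field_simps)
    qed
    then show ?thesis using 1 by simp
  next
    case 2
    then show ?thesis using line[of "-q / r"] by (simp add: field_simps power2_eq_square)
  qed
  then show ?thesis unfolding p_def q_def r_def .
qed

(* A positive semidefinite symmetric matrix b whose Rayleigh quotients come arbitrarily close
   to 0 has no left inverse c: for y = b x we get |y|^2 = <x, b y> <= sqrt(q(x) q(y)), so |b x|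
   is small compared with |x|, while |x| = |c b x| <= frob c * |b x|. *)
lemma psd_degenerate_not_invertible:
  assumes sym: "symmetric_mat n b" and psd: "\<And>z. 0 \<le> bilin n b z z"
    and small: "\<And>e. e > 0 \<Longrightarrow> \<exists>x. sqnorm n x > 0 \<and> bilin n b x x < e * sqnorm n x"
    and inv: "\<And>x i. i < n \<Longrightarrow> mat_app n c (mat_app n b x) i = x i"
  shows False
proof -
  define Kb Kc where "Kb = frob n b" and "Kc = frob n c"
  have Kb: "Kb \<ge> 1" and Kc: "Kc \<ge> 1" unfolding Kb_def Kc_def by (auto intro: frob_ge_1)
  define e where "e = 1 / (2 * Kb * Kc)"
  have e: "e > 0" using Kb Kc unfolding e_def by simp
  obtain x where x: "sqnorm n x > 0" "bilin n b x x < e * sqnorm n x" using small[OF e] by blast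
  define y where "y = mat_app n b x"
  have x_le_y: "sqnorm n x \<le> Kc * sqnorm n y"
  proof -
    have "sqnorm n x = sqnorm n (mat_app n c y)" unfolding y_def by (rule sqnorm_cong) (simp add: inv)
    then show ?thesis unfolding Kc_def using sqnorm_mat_app_le by simp
  qed
  have y_pos: "sqnorm n y > 0"
    using x_le_y x(1) Kc sqnorm_nonneg[of n y] by (cases "sqnorm n y = 0") auto
  have "(sqnorm n y)\<^sup>2 = (bilin n b x y)\<^sup>2" unfolding y_def bilin_mat_app_self[OF sym] ..
  also have "\<dots> \<le> bilin n b x x * bilin n b y y" by (rule psd_Cauchy_Schwarz[OF sym psd])
  also have "\<dots> \<le> (e * sqnorm n x) * (Kb * sqnorm n y)"
    using abs_bilin_self_le[of n b y] x e psd[of x] psd[of y] unfolding Kb_def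
    by (intro mult_mono) auto
  finally have "sqnorm n y \<le> e * sqnorm n x * Kb"
    using y_pos by (simp add: power2_eq_square algebra_simps)
  then have "sqnorm n x \<le> Kc * (e * sqnorm n x * Kb)"
    using x_le_y Kc by (meson mult_left_mono order_trans zero_le_one order_trans)
  also have "\<dots> = sqnorm n x / 2" unfolding e_def using Kb Kc by (simp add: field_simps)
  finally show False using x by simp
qed

lemma rayleigh_infimum:
  assumes "bilin n a y y < \<alpha> * sqnorm n y"
  obtains m where "m < \<alpha>" "\<And>x. m * sqnorm n x \<le> bilin n a x x"
    "\<And>e. e > 0 \<Longrightarrow> \<exists>x. sqnorm n x > 0 \<and> bilin n a x x < (m + e) * sqnorm n x"
proof -
  have zero: "bilin n a x x = 0" if "sqnorm n x = 0" for x
    using abs_bilin_self_le[of n a x] that by simp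
  define S where "S = {bilin n a x x / sqnorm n x | x. sqnorm n x > 0}"
  have y: "sqnorm n y > 0"
    using assms zero[of y] sqnorm_nonneg[of n y] by (cases "sqnorm n y = 0") auto
  have yS: "bilin n a y y / sqnorm n y \<in> S" unfolding S_def using y by blast
  have "- frob n a \<le> s" if "s \<in> S" for s
  proof -
    obtain x where s: "s = bilin n a x x / sqnorm n x" and x: "sqnorm n x > 0"
      using \<open>s \<in> S\<close> unfolding S_def by blast
    have "- (frob n a * sqnorm n x) \<le> bilin n a x x" using abs_bilin_self_le[of n a x] by simp
    then show ?thesis using x by (simp add: s pos_le_divide_eq)
  qed
  then have bdd: "bdd_below S" by (rule bdd_belowI)
  define m where "m = Inf S"
  have below: "m \<le> s" if "s \<in> S" for s unfolding m_def using bdd that by (simp add: cInf_lower)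
  show ?thesis
  proof
    have "m * sqnorm n y \<le> bilin n a y y" using below[OF yS] y by (simp add: pos_le_divide_eq)
    with assms have "m * sqnorm n y < \<alpha> * sqnorm n y" by linarith
    then show "m < \<alpha>" using y by simp
    show "m * sqnorm n x \<le> bilin n a x x" for x
    proof (cases "sqnorm n x > 0")
      case True
      then have "m \<le> bilin n a x x / sqnorm n x" using below unfolding S_def by blast
      then show ?thesis using True by (simp add: field_simps)
    qed (use zero sqnorm_nonneg[of n x] in \<open>auto simp: antisym_conv2\<close>)
    show "\<exists>x. sqnorm n x > 0 \<and> bilin n a x x < (m + e) * sqnorm n x" if "e > 0" for e
    proof -
      obtain s where "s \<in> S" "s < m + e"
        using cInf_lessD[of S "m + e"] yS \<open>e > 0\<close> unfolding m_def by auto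
      then show ?thesis unfolding S_def by (auto simp: field_simps)
    qed
  qed
qed

definition mat_fun :: "real mat \<Rightarrow> nat \<Rightarrow> nat \<Rightarrow> real" where
  "mat_fun A = (\<lambda>i j. A $$ (i, j))"

lemma mult_mat_vec_mat_app:
  assumes "A \<in> carrier_mat n n" "i < n"
  shows "(A *\<^sub>v vec n x) $ i = mat_app n (mat_fun A) x i"
  using assms by (simp add: mult_mat_vec_def scalar_prod_def mat_app_def mat_fun_def atLeast0LessThan)

lemma det_nonzero_left_inverse:
  assumes B: "B \<in> carrier_mat n n" and "det B \<noteq> 0"
  obtains c where "\<And>x i. i < n \<Longrightarrow> mat_app n c (mat_app n (mat_fun B) x) i = x i"
proof -
  obtain M where M: "M \<in> carrier_mat n n" "M * B = 1\<^sub>m n"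
    using det_non_zero_imp_unit[OF B \<open>det B \<noteq> 0\<close>, of undefined]
    unfolding Units_def ring_mat_def by auto
  show ?thesis
  proof (rule that[of "mat_fun M"])
    fix x :: "nat \<Rightarrow> real" and i assume i: "i < n"
    have "x i = (M *\<^sub>v (B *\<^sub>v vec n x)) $ i"
      using M B i by (simp flip: assoc_mult_mat_vec)
    also have "\<dots> = mat_app n (mat_fun M) (\<lambda>j. (B *\<^sub>v vec n x) $ j) i"
    proof -
      have "B *\<^sub>v vec n x = vec n (\<lambda>j. (B *\<^sub>v vec n x) $ j)" using B by auto
      then show ?thesis using mult_mat_vec_mat_app[OF M(1) i] by metis
    qed
    also have "\<dots> = mat_app n (mat_fun M) (mat_app n (mat_fun B) x) i"
      by (intro mat_app_cong) (simp add: mult_mat_vec_mat_app[OF B])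
    finally show "mat_app n (mat_fun M) (mat_app n (mat_fun B) x) i = x i" ..
  qed
qed

(* Every Rayleigh quotient of a real symmetric matrix is exceeded by some eigenvalue: the
   infimum m of the Rayleigh quotient is itself an eigenvalue, since A - m I is singular. *)
lemma eigenvalue_below_rayleigh:
  fixes A :: "real mat"
  assumes A: "A \<in> carrier_mat n n" and sym: "symmetric_mat n (mat_fun A)"
    and y: "bilin n (mat_fun A) y y < \<alpha> * sqnorm n y"
  obtains e where "eigenvalue A e" "e < \<alpha>"
proof -
  define a where "a = mat_fun A"
  obtain m where m: "m < \<alpha>" "\<And>x. m * sqnorm n x \<le> bilin n a x x"
    "\<And>e. e > 0 \<Longrightarrow> \<exists>x. sqnorm n x > 0 \<and> bilin n a x x < (m + e) * sqnorm n x"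
    using rayleigh_infimum y unfolding a_def by blast
  define B where "B = char_matrix A m"
  have B: "B \<in> carrier_mat n n" unfolding B_def using A by simp
  define b where "b = mat_fun B"
  have b: "b i j = a i j - (if i = j then m else 0)" if "i < n" "j < n" for i j
    unfolding b_def a_def B_def char_matrix_def mat_fun_def using A that by auto
  have mat_app_b: "mat_app n b x i = mat_app n a x i - m * x i" if "i < n" for x i
  proof -
    have "mat_app n b x i = (\<Sum>j<n. a i j * x j - (if j = i then m * x i else 0))"
      unfolding mat_app_def using that by (intro sum.cong refl) (auto simp: b algebra_simps)
    then show ?thesis unfolding mat_app_def using that by (simp add: sum_subtractf)
  qed
  have bilin_b: "bilin n b x x = bilin n a x x - m * sqnorm n x" for x
  proof -
    have "bilin n b x x = (\<Sum>i<n. x i * mat_app n a x i - m * (x i)\<^sup>2)"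
      unfolding bilin_def by (intro sum.cong refl) (simp add: mat_app_b algebra_simps power2_eq_square)
    then show ?thesis unfolding bilin_def sqnorm_def by (simp add: sum_subtractf sum_distrib_left)
  qed
  have "det B = 0"
  proof (rule ccontr)
    assume "det B \<noteq> 0"
    then obtain c where inv: "\<And>x i. i < n \<Longrightarrow> mat_app n c (mat_app n b x) i = x i"
      using det_nonzero_left_inverse[OF B] unfolding b_def by blast
    show False
    proof (rule psd_degenerate_not_invertible[OF _ _ _ inv])
      show "symmetric_mat n b" using sym unfolding symmetric_mat_def a_def[symmetric] by (auto simp: b)
      show "0 \<le> bilin n b z z" for z using m(2)[of z] by (simp add: bilin_b)
      show "\<exists>x. sqnorm n x > 0 \<and> bilin n b x x < e * sqnorm n x" if "e > 0" for e
        using m(3)[OF that] by (auto simp: bilin_b algebra_simps)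
    qed
  qed
  then have "eigenvalue A m" unfolding eigenvalue_det[OF A] B_def .
  then show ?thesis using m(1) that by blast
qed

section \<open>Cycles in unicyclic graphs\<close>

lemma all_less_3: "(\<forall>i<3::nat. P i) \<longleftrightarrow> P 0 \<and> P 1 \<and> P 2"
proof -
  have "i < 3 \<longleftrightarrow> i = 0 \<or> i = 1 \<or> i = 2" for i :: nat by linarith
  then show ?thesis by auto
qed

lemma all_less_4: "(\<forall>i<4::nat. P i) \<longleftrightarrow> P 0 \<and> P 1 \<and> P 2 \<and> P 3"
proof -
  have "i < 4 \<longleftrightarrow> i = 0 \<or> i = 1 \<or> i = 2 \<or> i = 3" for i :: nat by linarith
  then show ?thesis by auto
qed

lemma is_cycle_3_iff:
  "is_cycle n E [a, b, c] \<longleftrightarrow> distinct [a, b, c] \<and> a < n \<and> b < n \<and> c < n \<and> E a b \<and> E b c \<and> E c a"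
proof -
  have "length [a, b, c] = 3" by simp
  then show ?thesis unfolding is_cycle_def by (simp only: all_less_3) (simp add: conj_ac)
qed

lemma is_cycle_4_iff:
  "is_cycle n E [a, b, c, d] \<longleftrightarrow>
     distinct [a, b, c, d] \<and> a < n \<and> b < n \<and> c < n \<and> d < n \<and> E a b \<and> E b c \<and> E c d \<and> E d a"
proof -
  have "length [a, b, c, d] = 4" by simp
  then show ?thesis unfolding is_cycle_def by (simp only: all_less_4) (simp add: conj_ac)
qed
lemma unicyclic_sym: "unicyclic n E \<Longrightarrow> E u w \<Longrightarrow> E w u"
  unfolding unicyclic_def simple_graph_def by blast

lemma unicyclic_irrefl: "unicyclic n E \<Longrightarrow> \<not> E u u"
  unfolding unicyclic_def simple_graph_def by blast

lemma Union_cycle_edges: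
  assumes "vs \<noteq> []"
  shows "\<Union> (cycle_edges vs) = set vs"
proof
  show "\<Union> (cycle_edges vs) \<subseteq> set vs"
    using assms unfolding cycle_edges_def by (auto intro!: nth_mem)
  show "set vs \<subseteq> \<Union> (cycle_edges vs)"
  proof
    fix x assume "x \<in> set vs"
    then obtain i where "i < length vs" "x = vs ! i" by (auto simp: in_set_conv_nth)
    then show "x \<in> \<Union> (cycle_edges vs)" unfolding cycle_edges_def by blast
  qed
qed

lemma is_cycle_length: "is_cycle n E vs \<Longrightarrow> 3 \<le> length vs"
  unfolding is_cycle_def by (rule conjunct1)

(* The key consequence of unicyclicity used throughout: any two cycles have the same vertex
   set, so exhibiting a cycle through a vertex off the cycle (or missing one of its vertices)
   is a contradiction. *)
lemma unicyclic_cycle_vertices_unique: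
  assumes U: "unicyclic n E" and "is_cycle n E vs" and "is_cycle n E ws"
  shows "set vs = set ws"
proof -
  obtain C where C: "cycles n E = {C}"
    using U unfolding unicyclic_def by (metis card_1_singletonE)
  have "cycle_edges vs \<in> cycles n E" "cycle_edges ws \<in> cycles n E"
    unfolding cycles_def using assms(2,3) by auto
  then have "\<Union> (cycle_edges vs) = \<Union> (cycle_edges ws)" using C by simp
  moreover have "vs \<noteq> []" "ws \<noteq> []" using assms(2,3) is_cycle_length by fastforce+
  ultimately show ?thesis by (simp add: Union_cycle_edges)
qed

lemma unicyclic_has_cycle:
  assumes "unicyclic n E"
  obtains vs where "is_cycle n E vs"
proof -
  have "cycles n E \<noteq> {}" using assms unfolding unicyclic_def by auto
  then show ?thesis using that unfolding cycles_def by auto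
qed

lemma is_cycle_step:
  assumes "is_cycle n E vs" "Suc i < length vs"
  shows "E (vs ! i) (vs ! Suc i)"
proof -
  have "E (vs ! i) (vs ! ((i + 1) mod length vs))"
    using assms(1) Suc_lessD[OF assms(2)] unfolding is_cycle_def by blast
  moreover have "(i + 1) mod length vs = Suc i" using assms(2) by (metis Suc_eq_plus1 mod_less)
  ultimately show ?thesis by metis
qed

lemma exists_vertex_outside:
  assumes "finite S" "card S < n"
  obtains w where "w < n" "w \<notin> S"
proof -
  have "\<not> {..<n} \<subseteq> S"
  proof
    assume "{..<n} \<subseteq> S"
    then have "card {..<n} \<le> card S" by (rule card_mono[OF assms(1)])
    then show False using assms(2) by simp
  qed
  then show ?thesis using that by auto
qed

lemma connected_has_neighbour:
  assumes "connected_graph n E" "v < n" "2 \<le> n"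
  obtains z where "z < n" "E v z"
proof -
  define u :: nat where "u = (if v = 0 then 1 else 0)"
  have u: "u < n" "u \<noteq> v" using assms(2,3) unfolding u_def by auto
  have "(\<lambda>x y. x < n \<and> y < n \<and> E x y)\<^sup>*\<^sup>* v u"
    using assms(1,2) u unfolding connected_graph_def by blast
  then show ?thesis using u(2) that by (cases rule: converse_rtranclpE) auto
qed

lemma is_cycle_distinct: "is_cycle n E vs \<Longrightarrow> distinct vs"
  unfolding is_cycle_def by blast

(* Every edge dominates all other vertices, i.e. the complement contains no induced path on three
   vertices whose end vertices are adjacent in E. *)
definition edges_dominate :: "nat \<Rightarrow> (nat \<Rightarrow> nat \<Rightarrow> bool) \<Rightarrow> bool" where
  "edges_dominate n E \<longleftrightarrow> (\<forall>p<n. \<forall>q<n. \<forall>b<n. E p q \<and> p \<noteq> b \<and> q \<noteq> b \<longrightarrow> E p b \<or> E q b)"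

(* A vertex outside a dominated triangle is adjacent to two of its vertices: a new triangle. *)
lemma triangle_edges_dominate_False:
  assumes U: "unicyclic n E" and D: "edges_dominate n E"
    and C: "is_cycle n E [a, b, c]" and w: "w < n" "w \<notin> {a, b, c}"
  shows False
proof -
  note sym = unicyclic_sym[OF U]
  have abc: "distinct [a, b, c]" "a < n" "b < n" "c < n" "E a b" "E b c" "E c a"
    using C by (simp_all add: is_cycle_3_iff)
  then have "E a w \<or> E b w" "E b w \<or> E c w" "E c w \<or> E a w"
    using D w unfolding edges_dominate_def by auto
  then consider "E a w" "E b w" | "E b w" "E c w" | "E c w" "E a w" by blast
  then have "\<exists>ws. is_cycle n E ws \<and> w \<in> set ws"
  proof cases
    case 1 then have "is_cycle n E [w, a, b]" using abc w by (auto simp: is_cycle_3_iff intro: sym)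
    then show ?thesis by force
  next
    case 2 then have "is_cycle n E [w, b, c]" using abc w by (auto simp: is_cycle_3_iff intro: sym)
    then show ?thesis by force
  next
    case 3 then have "is_cycle n E [w, c, a]" using abc w by (auto simp: is_cycle_3_iff intro: sym)
    then show ?thesis by force
  qed
  then show False using unicyclic_cycle_vertices_unique[OF U C] w by auto
qed

(* A vertex outside a dominated quadrangle closes a cycle through itself. *)
lemma square_edges_dominate_False:
  assumes U: "unicyclic n E" and D: "edges_dominate n E"
    and C: "is_cycle n E [a, b, c, d]" and w: "w < n" "w \<notin> {a, b, c, d}"
  shows False
proof -
  note sym = unicyclic_sym[OF U]
  have abcd: "distinct [a, b, c, d]" "a < n" "b < n" "c < n" "d < n" "E a b" "E b c" "E c d" "E d a"
    using C by (simp_all add: is_cycle_4_iff)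
  then have "E a w \<or> E b w" "E c w \<or> E d w"
    using D w unfolding edges_dominate_def by auto
  then consider "E a w" "E c w" | "E a w" "E d w" | "E b w" "E c w" | "E b w" "E d w" by blast
  then have "\<exists>ws. is_cycle n E ws \<and> w \<in> set ws"
  proof cases
    case 1 then have "is_cycle n E [w, a, b, c]" using abcd w by (auto simp: is_cycle_4_iff intro: sym)
    then show ?thesis by force
  next
    case 2 then have "is_cycle n E [w, d, a]" using abcd w by (auto simp: is_cycle_3_iff intro: sym)
    then show ?thesis by force
  next
    case 3 then have "is_cycle n E [w, b, c]" using abcd w by (auto simp: is_cycle_3_iff intro: sym)
    then show ?thesis by force
  next
    case 4 then have "is_cycle n E [w, b, c, d]" using abcd w by (auto simp: is_cycle_4_iff intro: sym)
    then show ?thesis by force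
  qed
  then show False using unicyclic_cycle_vertices_unique[OF U C] w by auto
qed

(* On a cycle v0 v1 v2 v3 v4 ..., domination of v3 by the edge v0 v1 gives a chord and a shorter
   cycle avoiding v4. *)
lemma long_cycle_edges_dominate_False:
  assumes U: "unicyclic n E" and D: "edges_dominate n E"
    and C: "is_cycle n E vs" and len: "5 \<le> length vs"
  shows False
proof -
  obtain v0 v1 v2 v3 v4 rest where vs: "vs = v0 # v1 # v2 # v3 # v4 # rest"
    using len by (auto simp: numeral_eq_Suc Suc_le_length_iff)
  have dist: "distinct vs" by (rule is_cycle_distinct[OF C])
  have lt: "v0 < n" "v1 < n" "v2 < n" "v3 < n"
    using C unfolding is_cycle_def vs by auto
  have e: "E v0 v1" "E v1 v2" "E v2 v3"
    using is_cycle_step[OF C, of 0] is_cycle_step[OF C, of 1] is_cycle_step[OF C, of 2]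
    unfolding vs by (simp_all add: numeral_eq_Suc)
  have "E v0 v3 \<or> E v1 v3" using D lt e dist unfolding edges_dominate_def vs by auto
  then obtain ws where ws: "is_cycle n E ws" "v4 \<notin> set ws"
  proof
    assume "E v0 v3"
    then have "is_cycle n E [v0, v1, v2, v3]"
      using lt e dist unfolding vs by (auto simp: is_cycle_4_iff intro: unicyclic_sym[OF U])
    then show ?thesis using that dist unfolding vs by force
  next
    assume "E v1 v3"
    then have "is_cycle n E [v1, v2, v3]"
      using lt e dist unfolding vs by (auto simp: is_cycle_3_iff intro: unicyclic_sym[OF U])
    then show ?thesis using that dist unfolding vs by force
  qed
  then show False using unicyclic_cycle_vertices_unique[OF U C ws(1)] unfolding vs by auto
qed

lemma unicyclic_not_edges_dominate:
  assumes U: "unicyclic n E" and n: "5 \<le> n"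
  shows "\<not> edges_dominate n E"
proof
  assume D: "edges_dominate n E"
  obtain vs where C: "is_cycle n E vs" using U by (rule unicyclic_has_cycle)
  have card: "card (set vs) = length vs" using is_cycle_distinct[OF C] by (rule distinct_card)
  consider "length vs = 3" | "length vs = 4" | "5 \<le> length vs" using is_cycle_length[OF C] by linarith
  then show False
  proof cases
    case 1
    then obtain a b c where vs: "vs = [a, b, c]" by (auto simp: numeral_eq_Suc length_Suc_conv)
    obtain w where w: "w < n" "w \<notin> set vs" using exists_vertex_outside[of "set vs" n] card 1 n by auto
    show False by (rule triangle_edges_dominate_False[OF U D C[unfolded vs] w(1)]) (use w(2) vs in auto)
  next
    case 2
    then obtain a b c d where vs: "vs = [a, b, c, d]" by (auto simp: numeral_eq_Suc length_Suc_conv)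
    obtain w where w: "w < n" "w \<notin> set vs" using exists_vertex_outside[of "set vs" n] card 2 n by auto
    show False by (rule square_edges_dominate_False[OF U D C[unfolded vs] w(1)]) (use w(2) vs in auto)
  next
    case 3
    then show False using long_cycle_edges_dominate_False[OF U D C] by simp
  qed
qed

section \<open>Sign pattern of eigenvectors of the complement\<close>

definition adj_sum :: "nat \<Rightarrow> (nat \<Rightarrow> nat \<Rightarrow> bool) \<Rightarrow> (nat \<Rightarrow> real) \<Rightarrow> nat \<Rightarrow> real" where
  "adj_sum n G x i = (\<Sum>j<n. if G i j then x j else 0)"

lemma adj_sum_support:
  assumes "S \<subseteq> {..<n}" and "\<And>j. j < n \<Longrightarrow> j \<notin> S \<Longrightarrow> x j = 0"
  shows "adj_sum n G x i = (\<Sum>j\<in>S. if G i j then x j else 0)"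
  unfolding adj_sum_def using assms by (intro sum.mono_neutral_right) auto

lemma adj_sum_uminus: "adj_sum n G (\<lambda>j. - x j) i = - adj_sum n G x i"
  unfolding adj_sum_def by (subst sum_negf[symmetric]) (intro sum.cong, auto)

lemma positive_entry_negative_neighbour:
  assumes "adj_sum n G x w = lam * x w" and "lam < 0" and "0 < x w"
  obtains j where "j < n" "G w j" "x j < 0"
proof -
  have "adj_sum n G x w < 0" using assms by (simp add: mult_neg_pos)
  moreover have "0 \<le> adj_sum n G x w" if "\<forall>j<n. G w j \<longrightarrow> 0 \<le> x j"
    unfolding adj_sum_def using that by (intro sum_nonneg) auto
  ultimately have "\<not> (\<forall>j<n. G w j \<longrightarrow> 0 \<le> x j)" by fastforce
  then show ?thesis using that by force
qed

locale single_negative_entry =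
  fixes n :: nat and E :: "nat \<Rightarrow> nat \<Rightarrow> bool" and x :: "nat \<Rightarrow> real" and lam :: real and v :: nat
  assumes U: "unicyclic n E" and n: "5 \<le> n" and lam: "lam < -1"
    and eigen: "\<And>i. i < n \<Longrightarrow> adj_sum n (compl_graph E) x i = lam * x i"
    and v: "v < n" "x v < 0"
    and nonneg: "\<And>j. j < n \<Longrightarrow> j \<noteq> v \<Longrightarrow> 0 \<le> x j"
begin

definition pos :: "nat set" where "pos = {i. i < n \<and> 0 < x i}"

lemma pos_iff: "w \<in> pos \<longleftrightarrow> w < n \<and> 0 < x w"
  unfolding pos_def by simp

lemma v_notin_pos: "v \<notin> pos"
  using v by (simp add: pos_iff)

lemma zero_outside_support: "j < n \<Longrightarrow> j \<notin> insert v pos \<Longrightarrow> x j = 0"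
  using nonneg[of j] by (simp add: pos_iff)

lemma eigen_on_support:
  assumes "i < n"
  shows "lam * x i = (\<Sum>j\<in>insert v pos. if compl_graph E i j then x j else 0)"
proof -
  have "adj_sum n (compl_graph E) x i = (\<Sum>j\<in>insert v pos. if compl_graph E i j then x j else 0)"
    using v(1) zero_outside_support by (intro adj_sum_support) (auto simp: pos_iff)
  then show ?thesis using eigen[OF assms] by simp
qed

(* Since v is the only negative entry, every positive vertex is adjacent to v in the complement. *)
lemma pos_compl_adj_v:
  assumes "w \<in> pos" shows "compl_graph E w v"
proof -
  have w: "w < n" "0 < x w" using assms by (auto simp: pos_iff)
  obtain j where j: "j < n" "compl_graph E w j" "x j < 0"
    using positive_entry_negative_neighbour[OF eigen[OF w(1)]] lam w(2) by auto
  then have "j = v" using nonneg by force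
  then show ?thesis using j by simp
qed

lemma compl_adj_sym: "compl_graph E u w \<Longrightarrow> compl_graph E w u"
  using unicyclic_sym[OF U] unfolding compl_graph_def by blast

lemma finite_pos: "finite pos"
  unfolding pos_def by simp

(* The equation at v: the total positive mass is lam * x v > 0. *)
lemma sum_pos: "(\<Sum>j\<in>pos. x j) = lam * x v"
proof -
  have "lam * x v = (\<Sum>j\<in>pos. if compl_graph E v j then x j else 0)"
    using eigen_on_support[OF v(1)] finite_pos v_notin_pos by (simp add: compl_graph_def)
  also have "\<dots> = (\<Sum>j\<in>pos. x j)"
    using pos_compl_adj_v compl_adj_sym by (intro sum.cong) auto
  finally show ?thesis ..
qed

lemma pos_nonempty: "pos \<noteq> {}"
proof
  assume "pos = {}"
  then have "lam * x v = 0" using sum_pos by simp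
  moreover have "0 < lam * x v" using lam v(2) by (simp add: mult_neg_neg)
  ultimately show False by linarith
qed

(* A neighbour z of v in E carries the value 0, and is E-adjacent to every positive vertex since
   the equation at z is a sum of nonnegative terms. *)
lemma neighbour_of_v:
  obtains z where "z < n" "E v z" "z \<notin> insert v pos" "x z = 0"
proof -
  obtain z where z: "z < n" "E v z"
    using connected_has_neighbour[of n E v] U v(1) n unfolding unicyclic_def by auto
  have "z \<noteq> v" using z(2) unicyclic_irrefl[OF U] by auto
  moreover have "z \<notin> pos"
    using pos_compl_adj_v z(2) unicyclic_sym[OF U] unfolding compl_graph_def by blast
  ultimately show ?thesis using that z zero_outside_support by blast
qed

lemma neighbour_of_v_adj_pos:
  assumes z: "z < n" "E v z" "z \<notin> insert v pos" "x z = 0" and w: "w \<in> pos"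
  shows "E z w"
proof -
  have not_zv: "\<not> compl_graph E z v" using z(2) unicyclic_sym[OF U] by (simp add: compl_graph_def)
  have "0 = (\<Sum>j\<in>insert v pos. if compl_graph E z j then x j else 0)"
    using eigen_on_support[OF z(1)] z(4) by simp
  also have "\<dots> = (\<Sum>j\<in>pos. if compl_graph E z j then x j else 0)"
    using finite_pos v_notin_pos not_zv by simp
  finally have "\<forall>j\<in>pos. (if compl_graph E z j then x j else 0) = 0"
    using finite_pos by (subst sum_nonneg_eq_0_iff[symmetric]) (auto simp: pos_iff)
  then have "\<not> compl_graph E z w" using w by (metis less_irrefl pos_iff)
  moreover have "z \<noteq> w" using z(3) w by auto
  ultimately show ?thesis by (simp add: compl_graph_def)
qed

(* Every positive vertex w has a positive neighbour in E: by the equation at w, the positive mass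
   E-adjacent to w equals (-1 - lam) (x w - x v) > 0. *)
lemma pos_has_pos_neighbour:
  assumes w: "w \<in> pos" obtains u where "u \<in> pos" "E w u"
proof -
  define D where "D = (\<Sum>j\<in>pos. if E w j then x j else 0)"
  have wv: "compl_graph E w v" by (rule pos_compl_adj_v[OF w])
  have "(\<Sum>j\<in>pos. if compl_graph E w j then x j else 0)
      = (\<Sum>j\<in>pos. x j - (if j = w then x j else 0) - (if E w j then x j else 0))"
    using unicyclic_irrefl[OF U] by (intro sum.cong) (auto simp: compl_graph_def)
  also have "\<dots> = lam * x v - x w - D"
    using finite_pos w by (simp add: sum_subtractf sum_pos D_def)
  finally have "lam * x w = x v + (lam * x v - x w - D)"
    using eigen_on_support[of w] w finite_pos v_notin_pos wv by (simp add: pos_iff)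
  then have "D = (-1 - lam) * (x w - x v)" by (simp add: algebra_simps)
  moreover have "0 < (-1 - lam) * (x w - x v)" using lam v(2) w by (simp add: pos_iff)
  ultimately have "D \<noteq> 0" by linarith
  have "\<exists>u\<in>pos. E w u"
  proof (rule ccontr)
    assume "\<not> (\<exists>u\<in>pos. E w u)"
    then have "D = 0" unfolding D_def by (intro sum.neutral) auto
    with \<open>D \<noteq> 0\<close> show False ..
  qed
  then show ?thesis using that by blast
qed

(* The positive vertices are exactly the two ends of an edge, which together with the neighbour z
   of v forms the unique cycle, a triangle: any positive vertex and its positive neighbour form a
   triangle with z. *)

lemma pos_is_edge:
  assumes z: "z < n" "E v z" "z \<notin> insert v pos" "x z = 0"
  obtains a b where "pos = {a, b}" "E a b" "is_cycle n E [z, a, b]"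
proof -
  have triangle: "is_cycle n E [z, w, u]" if "w \<in> pos" "u \<in> pos" "E w u" for w u
    using that z neighbour_of_v_adj_pos[OF z] unicyclic_irrefl[OF U] unicyclic_sym[OF U]
    by (auto simp: is_cycle_3_iff pos_iff)
  obtain a where a: "a \<in> pos" using pos_nonempty by blast
  obtain b where b: "b \<in> pos" "E a b" using pos_has_pos_neighbour[OF a] by blast
  have "pos \<subseteq> {a, b}"
  proof
    fix w assume w: "w \<in> pos"
    obtain u where u: "u \<in> pos" "E w u" using pos_has_pos_neighbour[OF w] by blast
    have "set [z, w, u] = set [z, a, b]"
      using unicyclic_cycle_vertices_unique[OF U triangle[OF w u] triangle[OF a b]] .
    then show "w \<in> {a, b}" using w z(3) by auto
  qed
  then have "pos = {a, b}" using a b by auto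
  then show ?thesis using that b triangle[OF a b] by blast
qed

lemma eigen_on_edge:
  assumes ab: "pos = {a, b}" "a \<noteq> b" and "i < n"
  shows "lam * x i = (if compl_graph E i v then x v else 0)
      + (if compl_graph E i a then x a else 0) + (if compl_graph E i b then x b else 0)"
proof -
  have "a \<noteq> v" "b \<noteq> v" using v_notin_pos ab(1) by auto
  then show ?thesis using eigen_on_support[OF \<open>i < n\<close>] ab by simp
qed

(* The equations at a and b give x a = x b = t with lam t = x v, and the equation at v gives
   2 t = lam x v. *)
lemma edge_values:
  assumes ab: "pos = {a, b}" "E a b"
  shows "x b = x a" "lam * x a = x v" "2 * x a = lam * x v"
proof -
  have dist: "a \<noteq> b" "a < n" "b < n" using ab unicyclic_irrefl[OF U] by (auto simp: pos_iff)
  have "compl_graph E a v" "compl_graph E b v" using pos_compl_adj_v ab(1) by auto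
  then have xa: "lam * x a = x v" and "lam * x b = x v"
    using eigen_on_edge[OF ab(1) dist(1)] dist ab(2) unicyclic_sym[OF U]
    by (auto simp: compl_graph_def)
  moreover have "lam \<noteq> 0" using lam by simp
  ultimately show xb: "x b = x a" by (metis mult_cancel_left)
  show "lam * x a = x v" by (fact xa)
  show "2 * x a = lam * x v" using sum_pos ab(1) dist(1) xb by simp
qed

(* The contradiction: a fifth vertex y (with x y = 0) cannot be E-adjacent to both a and b (a second
   triangle), so it is adjacent in the complement to k in {1, 2} of them; the equation at y forces
   x v = -k t, i.e. lam = -k, which contradicts lam < -1 or 2 t = lam x v. *)
lemma impossible: False
proof -
  obtain z where z: "z < n" "E v z" "z \<notin> insert v pos" "x z = 0" by (rule neighbour_of_v)
  obtain a b where ab: "pos = {a, b}" "E a b" and C: "is_cycle n E [z, a, b]"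
    by (rule pos_is_edge[OF z])
  have "a \<noteq> b" using C by (simp add: is_cycle_3_iff)
  define t where "t = x a"
  have t: "0 < t" using pos_iff[of a] ab(1) unfolding t_def by blast
  have "card {v, z, a, b} < n" using card_length[of "[v, z, a, b]"] n by simp
  then obtain y where y: "y < n" "y \<notin> {v, z, a, b}"
    using exists_vertex_outside[of "{v, z, a, b}" n] by auto
  have "\<not> (E y a \<and> E y b)"
  proof
    assume "E y a \<and> E y b"
    then have "is_cycle n E [y, a, b]" using y C ab(2) unicyclic_sym[OF U] by (auto simp: is_cycle_3_iff)
    then show False using unicyclic_cycle_vertices_unique[OF U C] y by auto
  qed
  then have some: "compl_graph E y a \<or> compl_graph E y b" using y by (auto simp: compl_graph_def)
  define k :: real where "k = (if compl_graph E y a then 1 else 0) + (if compl_graph E y b then 1 else 0)"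
  have k: "k = 1 \<or> k = 2" using some unfolding k_def by auto
  have "x y = 0" using zero_outside_support[OF y(1)] y ab(1) by auto
  then have "0 = (if compl_graph E y v then x v else 0)
      + (if compl_graph E y a then t else 0) + (if compl_graph E y b then t else 0)"
    using eigen_on_edge[OF ab(1) \<open>a \<noteq> b\<close> y(1)] unfolding t_def edge_values(1)[OF ab] by simp
  moreover have "k * t = (if compl_graph E y a then t else 0) + (if compl_graph E y b then t else 0)"
    unfolding k_def by (simp add: distrib_right)
  ultimately have "0 = (if compl_graph E y v then x v else 0) + k * t" by linarith
  moreover have "0 < k * t" using k t by auto
  ultimately have xv: "x v = - k * t" by (auto split: if_splits)
  then have "lam * t = (- k) * t" using edge_values(2)[OF ab] unfolding t_def by simp
  then have "lam = - k" using t by (metis less_irrefl mult_cancel_right)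
  then have "k = 2" using k lam by auto
  then show False using edge_values(3)[OF ab] xv \<open>lam = - k\<close> t unfolding t_def by simp
qed

end

lemma compl_eigenvector_two_negative:
  assumes U: "unicyclic n E" and n: "5 \<le> n" and lam: "lam < -1"
    and eigen: "\<And>i. i < n \<Longrightarrow> adj_sum n (compl_graph E) x i = lam * x i"
    and nonzero: "\<exists>i<n. x i \<noteq> 0"
  shows "2 \<le> card {i. i < n \<and> x i < 0}"
proof (rule ccontr)
  assume "\<not> ?thesis"
  then have "card {i. i < n \<and> x i < 0} \<le> 1" by simp
  then consider "{i. i < n \<and> x i < 0} = {}" | v where "{i. i < n \<and> x i < 0} = {v}"
    by (metis (no_types, lifting) card_0_eq card_1_singletonE finite_nat_set_iff_bounded
        le_Suc_eq le_zero_eq One_nat_def mem_Collect_eq)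
  then show False
  proof cases
    case 1
    then have nonneg: "0 \<le> x j" if "j < n" for j using that by force
    obtain i where i: "i < n" "x i \<noteq> 0" using nonzero by blast
    then have "0 < x i" using nonneg[of i] by simp
    then obtain j where "j < n" "x j < 0"
      using positive_entry_negative_neighbour[OF eigen[OF i(1)]] lam by auto
    then show False using 1 by blast
  next
    case 2
    show False
    proof (rule single_negative_entry.impossible)
      show "single_negative_entry n E x lam v"
        using U n lam eigen 2 by unfold_locales force+
    qed
  qed
qed

(* The test vector e_p + e_q - e_b of an induced path p - b - q in the complement. *)
definition cherry_vector :: "nat \<Rightarrow> nat \<Rightarrow> nat \<Rightarrow> nat \<Rightarrow> real" where
  "cherry_vector p q b i = (if i = p then 1 else 0) + (if i = q then 1 else 0) - (if i = b then 1 else 0)"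

lemma sum_cherry_vector:
  assumes "p < n" "q < n" "b < n"
  shows "(\<Sum>i<n. cherry_vector p q b i * g i) = g p + g q - g b"
proof -
  have "(\<Sum>i<n. cherry_vector p q b i * g i)
      = (\<Sum>i<n. (if i = p then g i else 0) + (if i = q then g i else 0) - (if i = b then g i else 0))"
    by (intro sum.cong) (auto simp: cherry_vector_def algebra_simps)
  then show ?thesis using assms by (simp add: sum.distrib sum_subtractf)
qed

(* The spectral part: the test vector of an induced path in the complement has Rayleigh quotient
   -4/3, hence the least eigenvalue of the complement lies below -1. *)
lemma lambda_min_compl_unicyclic:
  assumes U: "unicyclic n E" and n: "5 \<le> n"
  shows "lambda_min (adj_mat n (compl_graph E)) < -1"
proof -
  define A where "A = adj_mat n (compl_graph E)"
  have A: "A \<in> carrier_mat n n" unfolding A_def adj_mat_def by simp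
  have entry: "mat_fun A i j = (if compl_graph E i j then 1 else 0)" if "i < n" "j < n" for i j
    using that unfolding A_def adj_mat_def mat_fun_def by simp
  have sym: "symmetric_mat n (mat_fun A)"
    using unicyclic_sym[OF U] unfolding symmetric_mat_def by (auto simp: entry compl_graph_def)
  obtain p q b where pqb: "p < n" "q < n" "b < n" "p \<noteq> b" "q \<noteq> b" "E p q" "\<not> E p b" "\<not> E q b"
    using unicyclic_not_edges_dominate[OF U n] unfolding edges_dominate_def by blast
  have "p \<noteq> q" using pqb(6) unicyclic_irrefl[OF U] by auto
  define y where "y = cherry_vector p q b"
  have "sqnorm n y = y p + y q - y b"
    unfolding sqnorm_def power2_eq_square y_def by (rule sum_cherry_vector[OF pqb(1-3)])
  also have "\<dots> = 3" using \<open>p \<noteq> q\<close> pqb(4,5) by (simp add: y_def cherry_vector_def)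
  finally have norm_y: "sqnorm n y = 3" .
  have "mat_app n (mat_fun A) y i = mat_fun A i p + mat_fun A i q - mat_fun A i b" for i
    unfolding mat_app_def y_def using sum_cherry_vector[OF pqb(1-3)] by (simp add: mult.commute)
  moreover have "\<not> E b p" "\<not> E b q" "E q p" using pqb(6-8) unicyclic_sym[OF U] by blast+
  ultimately have "bilin n (mat_fun A) y y = -4"
    unfolding bilin_def y_def sum_cherry_vector[OF pqb(1-3)]
    using pqb \<open>p \<noteq> q\<close> by (simp add: entry compl_graph_def)
  then have "bilin n (mat_fun A) y y < -1 * sqnorm n y" using norm_y by simp
  then obtain e where e: "eigenvalue A e" "e < -1" by (rule eigenvalue_below_rayleigh[OF A sym])
  have "lambda_min A \<le> e"
    unfolding lambda_min_def using card_finite_spectrum(1)[OF A] e(1)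
    by (intro Min_le) (auto simp: spectrum_def)
  then show ?thesis using e(2) unfolding A_def by simp
qed

lemma eigenvector_adj_mat:
  assumes "eigenvector (adj_mat n G) X lam"
  shows "\<And>i. i < n \<Longrightarrow> adj_sum n G (\<lambda>j. X $ j) i = lam * X $ i" and "\<exists>i<n. X $ i \<noteq> 0"
proof -
  have "adj_mat n G \<in> carrier_mat n n" unfolding adj_mat_def by simp
  then have X: "X \<in> carrier_vec n" "X \<noteq> 0\<^sub>v n" "adj_mat n G *\<^sub>v X = lam \<cdot>\<^sub>v X"
    using assms unfolding eigenvector_def by auto
  show "adj_sum n G (\<lambda>j. X $ j) i = lam * X $ i" if "i < n" for i
  proof -
    have "adj_sum n G (\<lambda>j. X $ j) i = (adj_mat n G *\<^sub>v X) $ i"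
      using X(1) that by (auto simp: adj_sum_def adj_mat_def scalar_prod_def atLeast0LessThan
          intro: sum.cong)
    then show ?thesis using X(1,3) that by simp
  qed
  show "\<exists>i<n. X $ i \<noteq> 0"
    using X(1,2) by (metis eq_vecI carrier_vecD index_zero_vec(1,2))
qed

theorem lemma3p3:
  fixes n :: nat and E :: "nat \<Rightarrow> nat \<Rightarrow> bool" and X :: "real vec"
  assumes "unicyclic n E" and "n \<ge> 5"
    and "eigenvector (adj_mat n (compl_graph E)) X (lambda_min (adj_mat n (compl_graph E)))"
  shows "card {i. i < n \<and> X $ i > 0} \<ge> 2 \<and> card {i. i < n \<and> X $ i < 0} \<ge> 2"
proof -
  define lam where "lam = lambda_min (adj_mat n (compl_graph E))"
  have lam: "lam < -1" unfolding lam_def by (rule lambda_min_compl_unicyclic[OF assms(1,2)])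
  note eigen = eigenvector_adj_mat[OF assms(3)[folded lam_def]]
  have "2 \<le> card {i. i < n \<and> X $ i < 0}"
    by (rule compl_eigenvector_two_negative[OF assms(1,2) lam eigen])
  moreover have "2 \<le> card {i. i < n \<and> - X $ i < 0}"
  proof (rule compl_eigenvector_two_negative[OF assms(1,2) lam])
    show "adj_sum n (compl_graph E) (\<lambda>j. - X $ j) i = lam * - X $ i" if "i < n" for i
      using eigen(1)[OF that] by (simp add: adj_sum_uminus)
    show "\<exists>i<n. - X $ i \<noteq> 0" using eigen(2) by simp
  qed
  ultimately show ?thesis by simp
qed

end
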